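(* Fix $\sigma\in(0,\tfrac12)$. There exists $\lambda^{*}>0$ such that, denoting by $\overline{\Gamma_0(\lambda)}$ the closure of $\Gamma_0(\lambda)$ in $\mathbb{R}^2$: - for $\lambda\in(0,\lambda^{*})$, $\overline{\Gamma_0(\lambda)}\cap(\{0\}\times(-\infty,0))=\emptyset$; - for $\lambda=\lambda^{*}$, $\overline{\Gamma_0(\lambda)}\cap(\{0\}\times(-\infty,0))=\{(0,-\xi^{*})\}$ for some $\xi^{*}\in(0,+\infty)$; - for $\lambda>\lambda^{*}$, $\overline{\Gamma_0(\lambda)}\cap(\{0\}\times(-\infty,0))=\{(0,-\xi_0),(0,-\xi_1)\}$ for some $0<\xi_0<\xi_1$.
   Context: Let $g(s)=s^2(1-s)$ and $G(u)=u^3/3-u^4/4$ on $[0,1]$. For $\lambda>0$ and $s\in(0,1)$, let $(u_s,v_s)$ be the unique solution, on its maximal interval of existence, of $u'=v$, $v'=-\lambda g(u)$, $u(0)=s$, $v(0)=0$. Let $T_0(s)$ be the time taken by $(u_s,v_s)$ to go from $(s,0)$ to the half-line $\{0\}\times(-\infty,0)$ along the level line $v^2+2\lambda G(u)=2\lambda G(s)$, let $\mathcal{I}^0_\lambda=\{s\in(0,1):T_0(s)>\sigma\}$, and let $\Gamma_0(\lambda)=\{(u_s(\sigma),v_s(\sigma)): s\in\mathcal{I}^0_\lambda\}$. *)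

theory Defs
  imports "HOL-Analysis.Analysis"
begin

definition g :: "real \<Rightarrow> real" where
  "g s = s^2 * (1 - s)"

definition G :: "real \<Rightarrow> real" where
  "G u = u^3/3 - u^4/4"

definition solves :: "real \<Rightarrow> real \<Rightarrow> real \<Rightarrow> (real \<Rightarrow> real) \<Rightarrow> (real \<Rightarrow> real) \<Rightarrow> bool" where
  "solves lam s T u v \<longleftrightarrow> u 0 = s \<and> v 0 = 0 \<and>
     (\<forall>t\<in>{0..T}. (u has_real_derivative v t) (at t within {0..T}) \<and>
                  (v has_real_derivative (- lam * g (u t))) (at t within {0..T}))"

definition T0 :: "real \<Rightarrow> real \<Rightarrow> real" where
  "T0 lam s = (THE T. T > 0 \<and> (\<exists>u v. solves lam s T u v \<and> u T = 0 \<and> v T < 0 \<and>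
                                   (\<forall>t\<in>{0..<T}. u t \<noteq> 0 \<or> v t \<ge> 0)))"

definition I0 :: "real \<Rightarrow> real \<Rightarrow> real set" where
  "I0 lam \<sigma> = {s \<in> {0<..<1}. T0 lam s > \<sigma>}"

definition Gamma0 :: "real \<Rightarrow> real \<Rightarrow> (real \<times> real) set" where
  "Gamma0 lam \<sigma> = {(u \<sigma>, v \<sigma>) | s u v. s \<in> I0 lam \<sigma> \<and> solves lam s \<sigma> u v}"

end

theory Submission
  imports Defs "HOL-Real_Asymp.Real_Asymp"
begin

text \<open>
  Along an orbit the energy \<open>v\<^sup>2 + 2 lam G(u)\<close> is conserved, so \<open>v\<close> is a function of \<open>u\<close>, and the
  substitution \<open>u = s (1 - w\<^sup>2)\<close> removes the square-root singularity at the turning point \<open>(s, 0)\<close>: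
  the orbit reaches \<open>u = s (1 - w\<^sup>2)\<close> at time \<open>scaled_time s w / sqrt lam\<close>, where \<open>scaled_time s w\<close>
  integrates \<open>2 / sqrt (2 s Q_s(1 - r\<^sup>2))\<close> over \<open>[0, w]\<close> and \<open>Q_s\<close> is the polynomial with
  \<open>G s - G (s x) = s\<^sup>3 (1 - x) Q_s(x)\<close>. Hence \<open>T_0(s) = hit_time s / sqrt lam\<close> with
  \<open>hit_time s = scaled_time s 1\<close>, the points of \<open>Gamma_0(lam)\<close> are explicit functions of \<open>s\<close>, and
  the closure of \<open>Gamma_0(lam)\<close> meets the negative \<open>v\<close>-axis exactly in the points
  \<open>(0, - sqrt (2 lam G s))\<close> with \<open>hit_time s = sqrt lam sigma\<close>.

  Since \<open>s Q_s(x)\<close> is strictly concave in \<open>s\<close> and \<open>y \<mapsto> 1 / sqrt y\<close> is convex and decreasing,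
  \<open>hit_time\<close> is strictly convex on \<open>(0, 1)\<close>, and it tends to infinity at both ends. So it has a
  unique minimiser \<open>m\<close>, every value above \<open>hit_time m\<close> is taken exactly twice, and
  \<open>lam* = (hit_time m / sigma)\<^sup>2\<close>.
\<close>

section \<open>Real functions on intervals\<close>

definition strict_convex_on :: "real set \<Rightarrow> (real \<Rightarrow> real) \<Rightarrow> bool" where
  "strict_convex_on A f \<longleftrightarrow> (\<forall>x\<in>A. \<forall>y\<in>A. x \<noteq> y \<longrightarrow>
     (\<forall>t. 0 < t \<and> t < 1 \<longrightarrow> f ((1 - t) * x + t * y) < (1 - t) * f x + t * f y))"

lemma strict_convex_on_imp_convex_on:
  assumes "strict_convex_on A f" "convex A"
  shows "convex_on A f"
proof (rule convex_onI[OF _ assms(2)])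
  fix t x y :: real
  assume "0 < t" "t < 1" "x \<in> A" "y \<in> A"
  then have "x \<noteq> y \<Longrightarrow> f ((1 - t) * x + t * y) < (1 - t) * f x + t * f y"
    using assms(1) unfolding strict_convex_on_def by blast
  then show "f ((1 - t) *\<^sub>R x + t *\<^sub>R y) \<le> (1 - t) * f x + t * f y"
    by (cases "x = y") (auto simp: algebra_simps)
qed

lemma strict_convex_on_less_max:
  assumes "strict_convex_on A f" "a \<in> A" "b \<in> A" "a < x" "x < b"
  shows "f x < max (f a) (f b)"
proof -
  define t where "t = (x - a) / (b - a)"
  have t: "0 < t" "t < 1" using assms(4,5) unfolding t_def by (auto simp: field_simps)
  have "t * (b - a) = x - a" using assms(4,5) unfolding t_def by simp
  then have x: "x = (1 - t) * a + t * b" by (simp add: algebra_simps)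
  have "f x < (1 - t) * f a + t * f b"
    using assms(1-5) t unfolding x strict_convex_on_def by auto
  also have "\<dots> \<le> (1 - t) * max (f a) (f b) + t * max (f a) (f b)"
    using t by (intro add_mono mult_left_mono) auto
  finally show ?thesis by (simp add: algebra_simps)
qed

lemma strict_convex_on_grows_on_one_side:
  assumes "strict_convex_on {a<..<b} f" "x0 \<in> {a<..<b}"
  shows "(\<forall>x\<in>{a<..<x0}. f x0 < f x) \<or> (\<forall>x\<in>{x0<..<b}. f x0 < f x)"
proof (rule ccontr)
  assume "\<not> ?thesis"
  then obtain x y where "x \<in> {a<..<x0}" "f x \<le> f x0" "y \<in> {x0<..<b}" "f y \<le> f x0"
    by (auto simp: not_less)
  moreover have "f x0 < max (f x) (f y)"
    using strict_convex_on_less_max[OF assms(1)] assms(2) calculation by auto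
  ultimately show False by auto
qed

lemma strict_convex_on_min_level_set:
  assumes "strict_convex_on {a<..<b} f" "m \<in> {a<..<b}" "\<forall>x\<in>{a<..<b}. f m \<le> f x"
  shows "{x \<in> {a<..<b}. f x = f m} = {m}"
proof (intro equalityI subsetI)
  fix x assume x: "x \<in> {x \<in> {a<..<b}. f x = f m}"
  show "x \<in> {m}"
  proof (rule ccontr)
    assume "x \<notin> {m}"
    then have "f ((x + m) / 2) < f m"
      using strict_convex_on_less_max[OF assms(1), of x m "(x + m) / 2"]
        strict_convex_on_less_max[OF assms(1), of m x "(x + m) / 2"] x assms(2)
      by (cases x m rule: linorder_cases) auto
    moreover have "(x + m) / 2 \<in> {a<..<b}" using x assms(2) by auto
    ultimately show False using assms(3) by fastforce
  qed
qed (use assms(2) in auto)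

lemma strict_convex_on_level_set_two_points:
  assumes "strict_convex_on {a<..<b} f" "m \<in> {a<..<b}" "\<forall>x\<in>{a<..<b}. f m \<le> f x"
    and "x0 \<in> {a<..<m}" "f x0 = c" "x1 \<in> {m<..<b}" "f x1 = c" "f m < c"
  shows "{x \<in> {a<..<b}. f x = c} = {x0, x1}"
proof (intro equalityI subsetI)
  fix x assume x: "x \<in> {x \<in> {a<..<b}. f x = c}"
  have below: "f z < c" if "y \<in> {a<..<b}" "p \<in> {a<..<b}" "f y \<le> c" "f p \<le> c" "y < z" "z < p"
    for y z p
    using strict_convex_on_less_max[OF assms(1) that(1,2,5,6)] that(3,4) by simp
  have "x < x0 \<or> x = x0 \<or> x0 < x \<and> x < m \<or> x = m \<or> m < x \<and> x < x1 \<or> x = x1 \<or> x1 < x"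
    by linarith
  then show "x \<in> {x0, x1}"
    using below[where y=x and z=x0 and p=m] below[where y=x0 and z=x and p=m]
      below[where y=m and z=x and p=x1] below[where y=m and z=x1 and p=x] x assms(2,4-8)
    by auto
qed (use assms in auto)

lemma at_top_at_right_obtain_bound:
  fixes f :: "real \<Rightarrow> real"
  assumes "filterlim f at_top (at_right a)" "a < x"
  obtains a' where "a < a'" "a' < x" "\<forall>y\<in>{a<..a'}. c < f y"
proof -
  have "eventually (\<lambda>y. c < f y) (at_right a)" using assms(1) by (simp add: filterlim_at_top_dense)
  then obtain d where d: "d > a" "\<forall>y>a. y < d \<longrightarrow> c < f y" by (auto simp: eventually_at_right_field)
  show ?thesis
  proof (rule that)
    show "a < min ((a + d) / 2) ((a + x) / 2)" "min ((a + d) / 2) ((a + x) / 2) < x"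
      using d(1) assms(2) by (auto simp: min_less_iff_disj)
    show "\<forall>y\<in>{a<..min ((a + d) / 2) ((a + x) / 2)}. c < f y" using d by auto
  qed
qed

lemma at_top_at_left_obtain_bound:
  fixes f :: "real \<Rightarrow> real"
  assumes "filterlim f at_top (at_left b)" "x < b"
  obtains b' where "x < b'" "b' < b" "\<forall>y\<in>{b'..<b}. c < f y"
proof -
  have "eventually (\<lambda>y. c < f y) (at_left b)" using assms(1) by (simp add: filterlim_at_top_dense)
  then obtain d where d: "d < b" "\<forall>y>d. y < b \<longrightarrow> c < f y" by (auto simp: eventually_at_left_field)
  show ?thesis
  proof (rule that)
    show "x < max ((b + d) / 2) ((b + x) / 2)" "max ((b + d) / 2) ((b + x) / 2) < b"
      using d(1) assms(2) by (auto simp: less_max_iff_disj)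
    show "\<forall>y\<in>{max ((b + d) / 2) ((b + x) / 2)..<b}. c < f y" using d by auto
  qed
qed

lemma coercive_attains_min:
  fixes f :: "real \<Rightarrow> real"
  assumes "continuous_on {a<..<b} f" "filterlim f at_top (at_right a)" "filterlim f at_top (at_left b)"
    and "a < b"
  obtains m where "m \<in> {a<..<b}" "\<forall>x\<in>{a<..<b}. f m \<le> f x"
proof -
  define x0 where "x0 = (a + b) / 2"
  have x0: "a < x0" "x0 < b" using assms(4) unfolding x0_def by auto
  obtain a' where a': "a < a'" "a' < x0" "\<forall>y\<in>{a<..a'}. f x0 < f y"
    using at_top_at_right_obtain_bound[OF assms(2) x0(1)] .
  obtain b' where b': "x0 < b'" "b' < b" "\<forall>y\<in>{b'..<b}. f x0 < f y"
    using at_top_at_left_obtain_bound[OF assms(3) x0(2)] .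
  have "continuous_on {a'..b'} f" by (rule continuous_on_subset[OF assms(1)]) (use a' b' in auto)
  then obtain m where m: "m \<in> {a'..b'}" "\<forall>y\<in>{a'..b'}. f m \<le> f y"
    using continuous_attains_inf[OF compact_Icc, of a' b' f] a' b' by auto
  have "f m \<le> f x" if "x \<in> {a<..<b}" for x
  proof -
    have "f m \<le> f x0" using m(2) a' b' by auto
    consider "x \<le> a'" | "a' \<le> x \<and> x \<le> b'" | "b' \<le> x" by linarith
    then show ?thesis
    proof cases
      case 1
      then have "f x0 < f x" using that a'(3) by auto
      then show ?thesis using \<open>f m \<le> f x0\<close> by linarith
    next
      case 2 then show ?thesis using m(2) by auto
    next
      case 3
      then have "f x0 < f x" using that b'(3) by auto
      then show ?thesis using \<open>f m \<le> f x0\<close> by linarith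
    qed
  qed
  moreover have "m \<in> {a<..<b}" using m(1) a' b' by auto
  ultimately show ?thesis using that by blast
qed

lemma strict_convex_coercive_level_sets:
  fixes f :: "real \<Rightarrow> real"
  assumes "strict_convex_on {a<..<b} f" "filterlim f at_top (at_right a)" "filterlim f at_top (at_left b)"
    and "a < b"
  obtains m where "m \<in> {a<..<b}" "\<forall>x\<in>{a<..<b}. f m \<le> f x" "{x \<in> {a<..<b}. f x = f m} = {m}"
    "\<And>c. f m < c \<Longrightarrow> \<exists>x0 x1. x0 < x1 \<and> {x \<in> {a<..<b}. f x = c} = {x0, x1}"
proof -
  have cont: "continuous_on {a<..<b} f"
    using convex_on_continuous[OF open_greaterThanLessThan strict_convex_on_imp_convex_on[OF assms(1)]]
    by simp
  obtain m where m: "m \<in> {a<..<b}" "\<forall>x\<in>{a<..<b}. f m \<le> f x"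
    using coercive_attains_min[OF cont assms(2-4)] .
  have "\<exists>x0 x1. x0 < x1 \<and> {x \<in> {a<..<b}. f x = c} = {x0, x1}" if c: "f m < c" for c
  proof -
    obtain a' where a': "a < a'" "a' < m" "\<forall>y\<in>{a<..a'}. c < f y"
      using at_top_at_right_obtain_bound[OF assms(2)] m(1) by auto
    obtain b' where b': "m < b'" "b' < b" "\<forall>y\<in>{b'..<b}. c < f y"
      using at_top_at_left_obtain_bound[OF assms(3)] m(1) by auto
    have "continuous_on {a'..m} f" "continuous_on {m..b'} f"
      using a' b' by (auto intro: continuous_on_subset[OF cont])
    moreover have "f m \<le> c" "c \<le> f a'" "c \<le> f b'" using a' b' c by (auto intro: less_imp_le)
    ultimately obtain x0 x1 where "a' \<le> x0" "x0 \<le> m" "f x0 = c" "m \<le> x1" "x1 \<le> b'" "f x1 = c"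
      using IVT2'[of f m c a'] IVT'[of f m c b'] a' b' by (meson less_imp_le)
    moreover from this have "x0 \<noteq> m" "x1 \<noteq> m" using c by auto
    ultimately have "{x \<in> {a<..<b}. f x = c} = {x0, x1}"
      using a' b' c by (intro strict_convex_on_level_set_two_points[OF assms(1) m]) auto
    moreover have "x0 < x1" using \<open>x0 \<le> m\<close> \<open>m \<le> x1\<close> \<open>x0 \<noteq> m\<close> by auto
    ultimately show ?thesis by blast
  qed
  then show ?thesis using that m strict_convex_on_min_level_set[OF assms(1) m] by blast
qed

lemma continuous_on_first_zero:
  fixes f :: "real \<Rightarrow> real"
  assumes "continuous_on {a..b} f" "f a < 0" "0 \<le> f b" "a \<le> b"
  obtains c where "a < c" "c \<le> b" "f c = 0" "\<forall>x\<in>{a..<c}. f x < 0"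
proof -
  define Z where "Z = {x \<in> {a..b}. f x = 0}"
  have "closed Z"
    unfolding Z_def by (rule continuous_closed_preimage_constant[OF assms(1) closed_atLeastAtMost])
  then have "compact Z" unfolding compact_eq_bounded_closed Z_def
    by (auto intro: bounded_subset[OF bounded_closed_interval])
  moreover obtain z where "a \<le> z" "z \<le> b" "f z = 0" using IVT'[of f a 0 b] assms by auto
  then have "Z \<noteq> {}" unfolding Z_def by auto
  ultimately obtain c where c: "c \<in> Z" "\<forall>z\<in>Z. c \<le> z"
    using compact_attains_inf by blast
  have "f x < 0" if x: "x \<in> {a..<c}" for x
  proof (rule ccontr)
    assume "\<not> f x < 0"
    then obtain z where "a \<le> z" "z \<le> x" "f z = 0"
      using IVT'[of f a 0 x] continuous_on_subset[OF assms(1), of "{a..x}"] assms(2) x c(1)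
      unfolding Z_def by auto
    then have "z \<in> Z" using x c(1) unfolding Z_def by auto
    then have "c \<le> z" using c(2) by blast
    then show False using \<open>z \<le> x\<close> x by auto
  qed
  moreover have "a < c" using c(1) assms(2) unfolding Z_def by (cases "a = c") auto
  ultimately show ?thesis using that[of c] c(1) unfolding Z_def by auto
qed

section \<open>The potential and the time map\<close>

lemma DERIV_G: "(G has_real_derivative g x) (at x)"
  unfolding G_def[abs_def] g_def
  by (auto intro!: derivative_eq_intros simp: power2_eq_square power3_eq_cube algebra_simps)

lemma isCont_G: "isCont G x"
  using DERIV_G DERIV_isCont by blast

lemma G_less:
  assumes "a < b" "b \<le> 1"
  shows "G a < G b"
proof -
  have cont: "continuous_on {p..q} G" for p q
    using DERIV_G by (meson DERIV_isCont continuous_at_imp_continuous_on)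
  have less: "G p < G q" if "p < q" "q \<le> 1" "0 \<notin> {p<..<q}" for p q
  proof -
    have "g x > 0" if "p < x" "x < q" for x
      using that \<open>q \<le> 1\<close> \<open>0 \<notin> {p<..<q}\<close> unfolding g_def by auto
    then show ?thesis using DERIV_pos_imp_increasing_open[OF \<open>p < q\<close> _ cont] DERIV_G by blast
  qed
  show ?thesis
  proof (cases "0 \<in> {a<..<b}")
    case True
    then show ?thesis using less[of a 0] less[of 0 b] assms by auto
  qed (use less assms in auto)
qed

lemma G_pos: "0 < s \<Longrightarrow> s \<le> 1 \<Longrightarrow> 0 < G s"
  using G_less[of 0 s] by (simp add: G_def)

definition G_slope :: "real \<Rightarrow> real \<Rightarrow> real" where
  "G_slope s x = (1 + x + x^2) / 3 - s * (1 + x + x^2 + x^3) / 4"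

lemma G_diff_eq_G_slope: "G s - G (s * x) = s^3 * (1 - x) * G_slope s x"
  unfolding G_def G_slope_def by (simp add: field_simps power2_eq_square power3_eq_cube power4_eq_xxxx)

text \<open>This is \<open>G_diff_eq_G_slope\<close> differentiated in \<open>x\<close>.\<close>
lemma G_slope_identity:
  "G_slope s x - (1 - x) * ((1 + 2 * x) / 3 - s * (1 + 2 * x + 3 * x^2) / 4) = x^2 * (1 - s * x)"
  unfolding G_slope_def by (simp add: field_simps power2_eq_square power3_eq_cube)

lemma G_slope_pos:
  assumes "0 < s" "s < 1" "-1 < x" "x \<le> 1"
  shows "0 < G_slope s x"
proof -
  have "G_slope s x = (1 - x) * (3 * (x + 1/3)^2 + 2/3) / 12 + (1 - s) * (1 + x) * (1 + x^2) / 4"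
    unfolding G_slope_def by (simp add: field_simps power2_eq_square power3_eq_cube)
  moreover have "0 \<le> (1 - x) * (3 * (x + 1/3)^2 + 2/3) / 12" using assms by simp
  moreover have "0 < (1 - s) * (1 + x) * (1 + x^2) / 4" using assms by (simp add: add_pos_nonneg)
  ultimately show ?thesis by linarith
qed

lemma G_slope_one_minus_square_pos:
  assumes "0 < s" "s < 1" "r \<in> {-(6/5)..6/5}"
  shows "0 < G_slope s (1 - r^2)"
proof -
  have "\<bar>r\<bar> \<le> 6/5" using assms(3) by (intro abs_leI) auto
  then have "r^2 \<le> (6/5)^2" using abs_le_square_iff[of r "6/5"] by simp
  then show ?thesis using assms by (intro G_slope_pos) (auto simp: power2_eq_square)
qed

definition time_density :: "real \<Rightarrow> real \<Rightarrow> real" where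
  "time_density s r = 2 / sqrt (2 * s * G_slope s (1 - r^2))"

lemma time_density_pos: "0 < s \<Longrightarrow> s < 1 \<Longrightarrow> r \<in> {-(6/5)..6/5} \<Longrightarrow> 0 < time_density s r"
  using G_slope_one_minus_square_pos unfolding time_density_def by simp

lemma continuous_on_time_density:
  assumes "0 < s" "s < 1"
  shows "continuous_on {-(6/5)..6/5} (time_density s)"
proof -
  have "sqrt (2 * s * G_slope s (1 - r^2)) \<noteq> 0" if "r \<in> {-(6/5)..6/5}" for r
    using G_slope_one_minus_square_pos[OF assms that] assms by simp
  then show ?thesis unfolding time_density_def G_slope_def by (intro continuous_intros) auto
qed

lemma time_density_integrable:
  "0 < s \<Longrightarrow> s < 1 \<Longrightarrow> -(6/5) \<le> a \<Longrightarrow> b \<le> 6/5 \<Longrightarrow> time_density s integrable_on {a..b}"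
  by (rule integrable_continuous_interval, rule continuous_on_subset[OF continuous_on_time_density]) auto

text \<open>The base point \<open>-6/5\<close> makes \<open>scaled_time s\<close> an antiderivative of the density on an open
  interval containing \<open>[0, 1]\<close>, so that it is differentiable at both ends of \<open>[0, 1]\<close>.\<close>
definition scaled_time :: "real \<Rightarrow> real \<Rightarrow> real" where
  "scaled_time s w = integral {-(6/5)..w} (time_density s) - integral {-(6/5)..0} (time_density s)"

definition hit_time :: "real \<Rightarrow> real" where
  "hit_time s = scaled_time s 1"

lemma DERIV_scaled_time:
  assumes "0 < s" "s < 1" "-(6/5) < w" "w < 6/5"
  shows "(scaled_time s has_real_derivative time_density s w) (at w)"
proof -
  have "((\<lambda>x. integral {-(6/5)..x} (time_density s)) has_real_derivative time_density s w)
      (at w within {-(6/5)..6/5})"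
    by (rule integral_has_real_derivative[OF continuous_on_time_density[OF assms(1,2)]]) (use assms in auto)
  then have "((\<lambda>x. integral {-(6/5)..x} (time_density s)) has_real_derivative time_density s w) (at w)"
    using assms by (simp add: at_within_Icc_at)
  then show ?thesis unfolding scaled_time_def[abs_def] by (auto intro!: derivative_eq_intros)
qed

lemma continuous_on_scaled_time: "0 < s \<Longrightarrow> s < 1 \<Longrightarrow> continuous_on {-(6/5)<..<6/5} (scaled_time s)"
  using DERIV_scaled_time by (meson DERIV_isCont continuous_at_imp_continuous_on greaterThanLessThan_iff)

lemma scaled_time_0 [simp]: "scaled_time s 0 = 0"
  unfolding scaled_time_def by simp

lemma scaled_time_eq_integral:
  assumes "0 < s" "s < 1" "0 \<le> w" "w \<le> 6/5"
  shows "scaled_time s w = integral {0..w} (time_density s)"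
  using Henstock_Kurzweil_Integration.integral_combine[of "-(6/5)" 0 w "time_density s"]
    time_density_integrable[OF assms(1,2)] assms
  unfolding scaled_time_def by auto

lemma scaled_time_strict_mono:
  assumes "0 < s" "s < 1" "-(6/5) < a" "a < b" "b < 6/5"
  shows "scaled_time s a < scaled_time s b"
proof (rule DERIV_pos_imp_increasing_open[OF assms(4)])
  show "\<exists>y. (scaled_time s has_real_derivative y) (at x) \<and> 0 < y" if "a < x" "x < b" for x
    using DERIV_scaled_time[OF assms(1,2), of x] time_density_pos[OF assms(1,2), of x] that assms by auto
  show "continuous_on {a..b} (scaled_time s)"
    by (rule continuous_on_subset[OF continuous_on_scaled_time[OF assms(1,2)]]) (use assms in auto)
qed

lemma scaled_time_less_iff:
  assumes "0 < s" "s < 1" "a \<in> {-(6/5)<..<6/5}" "b \<in> {-(6/5)<..<6/5}"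
  shows "scaled_time s a < scaled_time s b \<longleftrightarrow> a < b"
  using scaled_time_strict_mono[OF assms(1,2), of a b] scaled_time_strict_mono[OF assms(1,2), of b a] assms
  by (cases a b rule: linorder_cases) auto

lemma scaled_time_le_iff:
  "0 < s \<Longrightarrow> s < 1 \<Longrightarrow> a \<in> {-(6/5)<..<6/5} \<Longrightarrow> b \<in> {-(6/5)<..<6/5} \<Longrightarrow>
    scaled_time s a \<le> scaled_time s b \<longleftrightarrow> a \<le> b"
  using scaled_time_less_iff[of s b a] by auto

lemma scaled_time_eq_iff:
  "0 < s \<Longrightarrow> s < 1 \<Longrightarrow> a \<in> {-(6/5)<..<6/5} \<Longrightarrow> b \<in> {-(6/5)<..<6/5} \<Longrightarrow>
    scaled_time s a = scaled_time s b \<longleftrightarrow> a = b"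
  using scaled_time_le_iff[of s a b] scaled_time_le_iff[of s b a] by auto

lemma hit_time_pos: "0 < s \<Longrightarrow> s < 1 \<Longrightarrow> 0 < hit_time s"
  using scaled_time_strict_mono[of s 0 1] unfolding hit_time_def by simp

text \<open>The inverse is taken on an open interval around \<open>[0, 1]\<close>, again for differentiability
  at the ends.\<close>
definition scaled_time_inv :: "real \<Rightarrow> real \<Rightarrow> real" where
  "scaled_time_inv s = inv_into {-1<..<11/10} (scaled_time s)"

lemma scaled_time_inv_scaled_time:
  assumes "0 < s" "s < 1" "-1 < w" "w < 11/10"
  shows "scaled_time_inv s (scaled_time s w) = w"
proof -
  have "inj_on (scaled_time s) {-1<..<11/10}"
    by (rule inj_onI) (use scaled_time_eq_iff[OF assms(1,2)] in auto)
  then show ?thesis unfolding scaled_time_inv_def using assms by (simp add: inv_into_f_f)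
qed

lemma scaled_time_inv:
  assumes "0 < s" "s < 1" "scaled_time s (-1) < y" "y < scaled_time s (11/10)"
  shows "-1 < scaled_time_inv s y" "scaled_time_inv s y < 11/10" "scaled_time s (scaled_time_inv s y) = y"
proof -
  have "continuous_on {-1..11/10} (scaled_time s)"
    by (rule continuous_on_subset[OF continuous_on_scaled_time[OF assms(1,2)]]) auto
  then obtain w where w: "-1 \<le> w" "w \<le> 11/10" "scaled_time s w = y"
    using IVT'[of "scaled_time s" "-1" y "11/10"] assms(3,4) by auto
  then have "w \<noteq> -1" "w \<noteq> 11/10" using assms(3,4) by (metis less_irrefl)+
  then have y: "y \<in> scaled_time s ` {-1<..<11/10}" using w by auto
  show "-1 < scaled_time_inv s y" "scaled_time_inv s y < 11/10" "scaled_time s (scaled_time_inv s y) = y"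
    unfolding scaled_time_inv_def using inv_into_into[OF y] f_inv_into_f[OF y] by auto
qed

lemma DERIV_scaled_time_inv:
  assumes "0 < s" "s < 1" "scaled_time s (-1) < y" "y < scaled_time s (11/10)"
  shows "(scaled_time_inv s has_real_derivative inverse (time_density s (scaled_time_inv s y))) (at y)"
proof -
  let ?x = "scaled_time_inv s y"
  note x = scaled_time_inv[OF assms]
  define d where "d = min (?x + 1) (11/10 - ?x) / 2"
  have d: "0 < d" using x by (simp add: d_def)
  have "d \<le> (?x + 1) / 2" "d \<le> (11/10 - ?x) / 2" unfolding d_def by auto
  then have near: "-1 < z \<and> z < 11/10" if "\<bar>z - ?x\<bar> \<le> d" for z
    using that x(1,2) by (auto simp: abs_le_iff)
  have "isCont (scaled_time_inv s) (scaled_time s ?x)"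
  proof (rule isCont_inverse_function[where f="scaled_time s", OF d])
    show "scaled_time_inv s (scaled_time s z) = z" if "\<bar>z - ?x\<bar> \<le> d" for z
      using scaled_time_inv_scaled_time[OF assms(1,2)] near[OF that] by auto
    show "isCont (scaled_time s) z" if "\<bar>z - ?x\<bar> \<le> d" for z
      using DERIV_scaled_time[OF assms(1,2), of z] near[OF that] DERIV_isCont by auto
  qed
  then have cont: "isCont (scaled_time_inv s) y" using x(3) by simp
  have der: "(scaled_time s has_real_derivative time_density s ?x) (at ?x)"
    using DERIV_scaled_time[OF assms(1,2), of ?x] x by auto
  have "time_density s ?x \<noteq> 0" using time_density_pos[OF assms(1,2), of ?x] x by auto
  then show ?thesis
    using DERIV_inverse_function[OF der _ assms(3,4) _ cont] scaled_time_inv(3)[OF assms(1,2)] by blast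
qed

section \<open>Solutions of the initial value problem\<close>

lemma solves_restrict:
  assumes "solves lam s T u v" "T' \<le> T"
  shows "solves lam s T' u v"
proof -
  have "{0..T'} \<subseteq> {0..T}" using assms(2) by auto
  then show ?thesis using assms(1) unfolding solves_def by (meson DERIV_subset subsetD)
qed

lemma continuous_on_solves:
  assumes "solves lam s T u v"
  shows "continuous_on {0..T} u" "continuous_on {0..T} v"
  using assms unfolding solves_def continuous_on_eq_continuous_within by (auto intro: DERIV_continuous)

lemma solves_DERIV:
  assumes "solves lam s T u v" "0 < t" "t < T"
  shows "(u has_real_derivative v t) (at t)" "(v has_real_derivative (- lam * g (u t))) (at t)"
proof -
  have "(u has_real_derivative v t) (at t within {0..T})"
    "(v has_real_derivative (- lam * g (u t))) (at t within {0..T})"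
    using assms unfolding solves_def by auto
  then show "(u has_real_derivative v t) (at t)" "(v has_real_derivative (- lam * g (u t))) (at t)"
    using at_within_Icc_at[of 0 t T] assms(2,3) by auto
qed

lemma solves_energy:
  assumes "solves lam s T u v" "t \<in> {0..T}"
  shows "(v t)^2 + 2 * lam * G (u t) = 2 * lam * G s"
proof -
  have "\<exists>c. \<forall>x\<in>{0..T}. (v x)^2 + 2 * lam * G (u x) = c"
  proof (rule has_field_derivative_zero_constant)
    fix x assume "x \<in> {0..T}"
    then have du: "(u has_real_derivative v x) (at x within {0..T})"
      and dv: "(v has_real_derivative (- lam * g (u x))) (at x within {0..T})"
      using assms(1) unfolding solves_def by auto
    show "((\<lambda>x. (v x)^2 + 2 * lam * G (u x)) has_real_derivative 0) (at x within {0..T})"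
      by (rule derivative_eq_intros DERIV_chain2[OF DERIV_G] du dv refl | simp)+
  qed auto
  then obtain c where c: "\<forall>x\<in>{0..T}. (v x)^2 + 2 * lam * G (u x) = c" by blast
  have "0 \<in> {0..T}" using assms(2) by auto
  then have "(v t)^2 + 2 * lam * G (u t) = (v 0)^2 + 2 * lam * G (u 0)" using c assms(2) by simp
  then show ?thesis using assms(1) unfolding solves_def by simp
qed

lemma solves_v_neg:
  assumes "0 < lam" "0 < s" "s < 1" "solves lam s T u v" "0 < t" "t \<le> T"
  shows "v t < 0"
proof (rule ccontr)
  assume "\<not> v t < 0"
  have u0: "u 0 = s" and v0: "v 0 = 0" using assms(4) unfolding solves_def by auto
  have "(v has_real_derivative (- lam * g s)) (at 0 within {0..T})"
    using assms(4-6) u0 unfolding solves_def by auto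
  moreover have "- lam * g s < 0" using assms(1-3) unfolding g_def by simp
  ultimately obtain d
    where d: "d > 0" "\<And>h. 0 < h \<Longrightarrow> h \<le> T \<Longrightarrow> h < d \<Longrightarrow> v h < 0"
    using has_real_derivative_neg_dec_right v0 by (metis add_0 atLeastAtMost_iff less_eq_real_def)
  define a where "a = min d t / 2"
  have a: "0 < a" "a < t" "a < d" using d assms(5) by (auto simp: a_def)
  have "continuous_on {a..t} v"
    by (rule continuous_on_subset[OF continuous_on_solves(2)[OF assms(4)]]) (use a assms in auto)
  moreover have "v a < 0" using d(2)[of a] a assms(6) by auto
  ultimately obtain c where c: "a < c" "c \<le> t" "v c = 0" "\<forall>x\<in>{a..<c}. v x < 0"
    using continuous_on_first_zero[of a t v] a \<open>\<not> v t < 0\<close> by auto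
  have "u c < u 0"
  proof (rule DERIV_neg_imp_decreasing_open[where f=u])
    show "\<exists>y. (u has_real_derivative y) (at x) \<and> y < 0" if "0 < x" "x < c" for x
      using solves_DERIV(1)[OF assms(4), of x] d(2)[of x] c(4) that c(2) assms(6) a(3)
      by (cases "x < a") auto
    show "continuous_on {0..c} u"
      by (rule continuous_on_subset[OF continuous_on_solves(1)[OF assms(4)]]) (use c assms in auto)
  qed (use a c in auto)
  then have "G (u c) < G s" using G_less[of "u c" s] u0 assms(3) by auto
  moreover have "(v c)^2 + 2 * lam * G (u c) = 2 * lam * G s"
    using solves_energy[OF assms(4), of c] a c assms(6) by auto
  ultimately show False using c(3) assms(1) by simp
qed

lemma solves_u_decreasing:
  assumes "0 < lam" "0 < s" "s < 1" "solves lam s T u v" "0 \<le> a" "a < b" "b \<le> T"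
  shows "u b < u a"
proof (rule DERIV_neg_imp_decreasing_open[OF assms(6)])
  show "\<exists>y. (u has_real_derivative y) (at x) \<and> y < 0" if "a < x" "x < b" for x
    using solves_DERIV(1)[OF assms(4), of x] solves_v_neg[OF assms(1-4), of x] that assms(5-7) by auto
  show "continuous_on {a..b} u"
    by (rule continuous_on_subset[OF continuous_on_solves(1)[OF assms(4)]]) (use assms in auto)
qed

text \<open>The substitution \<open>u = s (1 - w^2)\<close> turns the equation into \<open>w' = sqrt lam / time_density s w\<close>,
  so \<open>w\<close> is the inverse of \<open>scaled_time s\<close> evaluated at \<open>sqrt lam * t\<close>; \<open>v\<close> then comes from
  \<open>v = u'\<close>.\<close>
definition traj_w :: "real \<Rightarrow> real \<Rightarrow> real \<Rightarrow> real" where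
  "traj_w lam s t = scaled_time_inv s (sqrt lam * t)"

definition traj_u :: "real \<Rightarrow> real \<Rightarrow> real \<Rightarrow> real" where
  "traj_u lam s t = s * (1 - (traj_w lam s t)^2)"

definition traj_v :: "real \<Rightarrow> real \<Rightarrow> real \<Rightarrow> real" where
  "traj_v lam s t = - s * traj_w lam s t * sqrt (2 * lam * s * G_slope s (1 - (traj_w lam s t)^2))"

lemma traj_w_bounds:
  assumes "0 < s" "s < 1" "scaled_time s (-1) < sqrt lam * t" "sqrt lam * t < scaled_time s (11/10)"
  shows "-1 < traj_w lam s t" "traj_w lam s t < 11/10" "scaled_time s (traj_w lam s t) = sqrt lam * t"
  using scaled_time_inv[OF assms] unfolding traj_w_def by auto

lemma traj_G_slope_pos:
  assumes "0 < s" "s < 1" "scaled_time s (-1) < sqrt lam * t" "sqrt lam * t < scaled_time s (11/10)"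
  shows "0 < G_slope s (1 - (traj_w lam s t)^2)"
  using G_slope_one_minus_square_pos[OF assms(1,2)] traj_w_bounds[OF assms] by auto

lemma DERIV_traj_w:
  assumes "0 < lam" "0 < s" "s < 1"
    and "scaled_time s (-1) < sqrt lam * t" "sqrt lam * t < scaled_time s (11/10)"
  shows "(traj_w lam s has_real_derivative
    sqrt (2 * lam * s * G_slope s (1 - (traj_w lam s t)^2)) / 2) (at t)"
proof -
  have "((\<lambda>t. scaled_time_inv s (sqrt lam * t)) has_real_derivative
      inverse (time_density s (traj_w lam s t)) * sqrt lam) (at t)"
    unfolding traj_w_def
    by (rule DERIV_chain2[where f="scaled_time_inv s" and g="\<lambda>t. sqrt lam * t",
          OF DERIV_scaled_time_inv[OF assms(2-5)]]) (auto intro!: derivative_eq_intros)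
  moreover have "inverse (time_density s (traj_w lam s t)) * sqrt lam
      = sqrt (2 * lam * s * G_slope s (1 - (traj_w lam s t)^2)) / 2"
    unfolding time_density_def by (simp add: real_sqrt_mult algebra_simps)
  ultimately show ?thesis unfolding traj_w_def[abs_def] by simp
qed

lemma DERIV_traj_u:
  assumes "0 < lam" "0 < s" "s < 1"
    and "scaled_time s (-1) < sqrt lam * t" "sqrt lam * t < scaled_time s (11/10)"
  shows "(traj_u lam s has_real_derivative traj_v lam s t) (at t)"
  unfolding traj_u_def[abs_def]
  by (rule derivative_eq_intros refl DERIV_traj_w[OF assms])+ (simp add: traj_v_def)

lemma DERIV_traj_v:
  assumes "0 < lam" "0 < s" "s < 1"
    and "scaled_time s (-1) < sqrt lam * t" "sqrt lam * t < scaled_time s (11/10)"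
  shows "(traj_v lam s has_real_derivative - lam * g (traj_u lam s t)) (at t)"
proof -
  define w where "w = traj_w lam s t"
  define x where "x = 1 - w^2"
  define R where "R = sqrt (2 * lam * s * G_slope s x)"
  define dQ where "dQ = (1 + 2 * x) / 3 - s * (1 + 2 * x + 3 * x^2) / 4"
  have Q: "0 < G_slope s x" using traj_G_slope_pos[OF assms(2-5)] unfolding x_def w_def .
  then have R: "0 < R" "R^2 = 2 * lam * s * G_slope s x" using assms(1,2) unfolding R_def by auto
  have dW: "(traj_w lam s has_real_derivative R / 2) (at t)"
    using DERIV_traj_w[OF assms] unfolding R_def x_def w_def .
  have "((\<lambda>t. G_slope s (1 - (traj_w lam s t)^2)) has_real_derivative dQ * (- (2 * w * (R / 2)))) (at t)"
    unfolding G_slope_def dQ_def x_def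
    by (auto intro!: derivative_eq_intros dW
        simp: w_def[symmetric] field_simps power2_eq_square power3_eq_cube)
  then have "((\<lambda>t. 2 * lam * s * G_slope s (1 - (traj_w lam s t)^2)) has_real_derivative
      2 * lam * s * (dQ * (- (2 * w * (R / 2))))) (at t)"
    by (rule DERIV_cmult)
  from DERIV_chain2[OF DERIV_real_sqrt this]
  have dR: "((\<lambda>t. sqrt (2 * lam * s * G_slope s (1 - (traj_w lam s t)^2))) has_real_derivative
      - lam * s * dQ * w) (at t)"
    using R Q assms(1,2) unfolding w_def[symmetric] x_def[symmetric] R_def[symmetric]
    by (simp add: field_simps)
  have "(traj_v lam s has_real_derivative (- s * (R / 2)) * R + (- lam * s * dQ * w) * (- s * w)) (at t)"
    using DERIV_mult[OF DERIV_cmult[OF dW, of "- s"] dR]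
    unfolding traj_v_def[abs_def] w_def[symmetric] x_def[symmetric] R_def[symmetric] by (simp add: mult.assoc)
  also have "(- s * (R / 2)) * R + (- lam * s * dQ * w) * (- s * w)
      = - lam * s^2 * (G_slope s x - (1 - x) * dQ)"
    unfolding x_def using R(2) unfolding x_def by (simp add: power2_eq_square algebra_simps)
  also have "\<dots> = - lam * g (traj_u lam s t)"
    unfolding dQ_def G_slope_identity g_def traj_u_def w_def[symmetric] x_def
    by (simp add: power2_eq_square algebra_simps)
  finally show ?thesis .
qed

lemma scaled_time_inv_domain:
  assumes "0 < s" "s < 1" "0 \<le> y" "y \<le> hit_time s"
  shows "scaled_time s (-1) < y" "y < scaled_time s (11/10)"
  using scaled_time_strict_mono[OF assms(1,2), of "-1" 0] scaled_time_strict_mono[OF assms(1,2), of 1 "11/10"]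
    assms unfolding hit_time_def by auto

lemma traj_solves:
  assumes "0 < lam" "0 < s" "s < 1" "sqrt lam * T \<le> hit_time s"
  shows "solves lam s T (traj_u lam s) (traj_v lam s)"
  unfolding solves_def
proof (intro conjI ballI)
  have "traj_w lam s 0 = 0"
    using scaled_time_inv_scaled_time[OF assms(2,3), of 0] unfolding traj_w_def by simp
  then show "traj_u lam s 0 = s" "traj_v lam s 0 = 0" unfolding traj_u_def traj_v_def by auto
  fix t assume "t \<in> {0..T}"
  then have "0 \<le> sqrt lam * t" "sqrt lam * t \<le> sqrt lam * T"
    using assms(1) by (auto intro: mult_left_mono)
  then have "0 \<le> sqrt lam * t" "sqrt lam * t \<le> hit_time s" using assms(4) by auto
  note inside = scaled_time_inv_domain[OF assms(2,3) this]
  show "(traj_u lam s has_real_derivative traj_v lam s t) (at t within {0..T})"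
    using DERIV_traj_u[OF assms(1-3) inside] by (rule has_field_derivative_at_within)
  show "(traj_v lam s has_real_derivative - lam * g (traj_u lam s t)) (at t within {0..T})"
    using DERIV_traj_v[OF assms(1-3) inside] by (rule has_field_derivative_at_within)
qed

lemma traj_w_range:
  assumes "0 < s" "s < 1" "0 \<le> sqrt lam * t" "sqrt lam * t < hit_time s"
  shows "0 \<le> traj_w lam s t" "traj_w lam s t < 1"
proof -
  note w = traj_w_bounds[OF assms(1,2) scaled_time_inv_domain[OF assms(1-3) less_imp_le[OF assms(4)]]]
  show "0 \<le> traj_w lam s t" "traj_w lam s t < 1"
    using scaled_time_le_iff[OF assms(1,2), of 0 "traj_w lam s t"]
      scaled_time_less_iff[OF assms(1,2), of "traj_w lam s t" 1] w assms(3,4)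
    unfolding hit_time_def by auto
qed

lemma traj_v_eq:
  assumes "0 < lam" "0 < s" "s < 1" "0 \<le> sqrt lam * t" "sqrt lam * t < hit_time s"
  shows "traj_v lam s t = - sqrt (2 * lam * (G s - G (traj_u lam s t)))"
proof -
  define w where "w = traj_w lam s t"
  have w: "0 \<le> w" using traj_w_range[OF assms(2-5)] unfolding w_def by simp
  have "G s - G (traj_u lam s t) = s^3 * w^2 * G_slope s (1 - w^2)"
    using G_diff_eq_G_slope[of s "1 - w^2"] unfolding traj_u_def w_def by simp
  then have "sqrt (2 * lam * (G s - G (traj_u lam s t)))
      = sqrt ((s * w)^2 * (2 * lam * s * G_slope s (1 - w^2)))"
    by (simp add: power2_eq_square power3_eq_cube algebra_simps)
  also have "\<dots> = s * w * sqrt (2 * lam * s * G_slope s (1 - w^2))"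
    using w assms(2) by (simp add: real_sqrt_mult)
  finally show ?thesis unfolding traj_v_def w_def by simp
qed

lemma solves_velocity:
  assumes "0 < lam" "0 < s" "s < 1" "solves lam s T u v" "0 < t" "t \<le> T" "0 \<le> u t"
  shows "- v t = s * sqrt (1 - u t / s) * sqrt lam * sqrt (2 * s * G_slope s (u t / s))"
proof -
  have "u t < s" using solves_u_decreasing[OF assms(1-4), of 0 t] assms(4-6) unfolding solves_def by auto
  then have ratio: "0 \<le> u t / s" "u t / s \<le> 1" using assms(2,7) by auto
  then have Q: "0 < G_slope s (u t / s)" using G_slope_pos[OF assms(2,3)] by auto
  have "(v t)^2 = 2 * lam * (G s - G (s * (u t / s)))"
    using solves_energy[OF assms(4), of t] assms(2,5,6) by (auto simp: algebra_simps)
  also have "\<dots> = (s * sqrt (1 - u t / s) * sqrt lam * sqrt (2 * s * G_slope s (u t / s)))^2"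
    unfolding G_diff_eq_G_slope using Q assms(1,2) \<open>u t < s\<close>
    by (simp add: power_mult_distrib power3_eq_cube algebra_simps) (simp add: power2_eq_square)
  finally have "(- v t)^2 = (s * sqrt (1 - u t / s) * sqrt lam * sqrt (2 * s * G_slope s (u t / s)))^2"
    by simp
  moreover have "0 \<le> - v t" using solves_v_neg[OF assms(1-6)] by simp
  moreover have "0 \<le> s * sqrt (1 - u t / s) * sqrt lam * sqrt (2 * s * G_slope s (u t / s))"
    using Q assms(1,2) ratio by simp
  ultimately show ?thesis using power2_eq_iff_nonneg by blast
qed

lemma DERIV_scaled_time_along_solution:
  assumes "0 < lam" "0 < s" "s < 1" "solves lam s T u v" "0 < x" "x < T" "0 \<le> u x"
  shows "((\<lambda>x. scaled_time s (sqrt (1 - u x / s))) has_real_derivative sqrt lam) (at x)"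
proof -
  define w where "w = sqrt (1 - u x / s)"
  have "u x < s" using solves_u_decreasing[OF assms(1-4), of 0 x] assms(4-6) unfolding solves_def by auto
  then have pos: "0 < 1 - u x / s" and ratio: "0 \<le> u x / s" "u x / s \<le> 1" using assms(2,7) by auto
  then have w: "0 < w" "w \<le> 1" "w^2 = 1 - u x / s" unfolding w_def by auto
  have "((\<lambda>x. 1 - u x / s) has_real_derivative - v x / s) (at x)"
    using solves_DERIV(1)[OF assms(4-6)] assms(2) by (auto intro!: derivative_eq_intros)
  from DERIV_chain2[OF DERIV_real_sqrt[OF pos] this]
  have "((\<lambda>x. sqrt (1 - u x / s)) has_real_derivative inverse w / 2 * (- v x / s)) (at x)"
    unfolding w_def .
  moreover have "(scaled_time s has_real_derivative time_density s w) (at (sqrt (1 - u x / s)))"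
    using DERIV_scaled_time[OF assms(2,3), of w] w unfolding w_def by auto
  ultimately have "((\<lambda>x. scaled_time s (sqrt (1 - u x / s))) has_real_derivative
      time_density s w * (inverse w / 2 * (- v x / s))) (at x)"
    by (rule DERIV_chain2[rotated])
  moreover have "time_density s w * (inverse w / 2 * (- v x / s)) = sqrt lam"
  proof -
    have "0 < G_slope s (u x / s)" using G_slope_pos[OF assms(2,3)] ratio by simp
    moreover have "time_density s w = 2 / sqrt (2 * s * G_slope s (u x / s))"
      unfolding time_density_def w(3) by simp
    ultimately show ?thesis
      using solves_velocity[OF assms(1-5) less_imp_le[OF assms(6)] assms(7)] assms(2) w
      unfolding w_def[symmetric] by (simp add: field_simps)
  qed
  ultimately show ?thesis by simp
qed

lemma solves_scaled_time:
  assumes "0 < lam" "0 < s" "s < 1" "solves lam s T u v" "\<forall>t\<in>{0..T}. 0 \<le> u t" "t \<in> {0..T}"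
  shows "scaled_time s (sqrt (1 - u t / s)) = sqrt lam * t"
proof (cases "t = 0")
  case True
  then show ?thesis using assms(2,4) unfolding solves_def by auto
next
  case False
  then have t: "0 < t" "t \<le> T" using assms(6) by auto
  define \<psi> where "\<psi> x = scaled_time s (sqrt (1 - u x / s)) - sqrt lam * x" for x
  have "\<psi> t = \<psi> 0"
  proof (rule DERIV_isconst_end[OF t(1)])
    have "continuous_on {0..t} (\<lambda>x. sqrt (1 - u x / s))"
      by (intro continuous_intros continuous_on_subset[OF continuous_on_solves(1)[OF assms(4)]])
        (use t assms(2) in auto)
    moreover have "(\<lambda>x. sqrt (1 - u x / s)) ` {0..t} \<subseteq> {-(6/5)<..<6/5}"
    proof (rule image_subsetI)
      fix x assume x: "x \<in> {0..t}"
      then have "0 \<le> u x" using assms(5) t by auto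
      moreover have "u x \<le> s"
        using solves_u_decreasing[OF assms(1-4), of 0 x] assms(4) x t unfolding solves_def
        by (cases "x = 0") auto
      ultimately have "0 \<le> sqrt (1 - u x / s)" "sqrt (1 - u x / s) \<le> 1" using assms(2) by auto
      then show "sqrt (1 - u x / s) \<in> {-(6/5)<..<6/5}" unfolding greaterThanLessThan_iff by linarith
    qed
    ultimately have "continuous_on {0..t} (\<lambda>x. scaled_time s (sqrt (1 - u x / s)))"
      using continuous_on_compose2[OF continuous_on_scaled_time[OF assms(2,3)]] by blast
    then show "continuous_on {0..t} \<psi>" unfolding \<psi>_def[abs_def] by (intro continuous_intros)
  next
    fix x assume x: "0 < x" "x < t"
    then have ux: "0 \<le> u x" using assms(5) t by simp
    show "(\<psi> has_real_derivative 0) (at x)"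
      using DERIV_scaled_time_along_solution[OF assms(1-4) x(1) _ ux] x t
      unfolding \<psi>_def[abs_def] by (auto intro!: derivative_eq_intros)
  qed
  then show ?thesis using assms(2,4) unfolding \<psi>_def solves_def by simp
qed

lemma solves_u_nonneg:
  assumes "0 < lam" "0 < s" "s < 1" "solves lam s T u v" "0 \<le> u T"
  shows "\<forall>t\<in>{0..T}. 0 \<le> u t"
proof
  fix t assume "t \<in> {0..T}"
  then show "0 \<le> u t" using solves_u_decreasing[OF assms(1-4), of t T] assms(5) by (cases "t = T") auto
qed

lemma solves_hit_time:
  assumes "0 < lam" "0 < s" "s < 1" "solves lam s T u v" "0 \<le> T" "u T = 0"
  shows "hit_time s = sqrt lam * T"
proof -
  from solves_scaled_time[OF assms(1-4) solves_u_nonneg[OF assms(1-4)], of T] show ?thesis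
    using assms(5,6) unfolding hit_time_def by simp
qed

lemma T0_eq:
  assumes "0 < lam" "0 < s" "s < 1"
  shows "T0 lam s = hit_time s / sqrt lam"
  unfolding T0_def
proof (rule the_equality)
  define T where "T = hit_time s / sqrt lam"
  have sT: "sqrt lam * T = hit_time s" using assms unfolding T_def by simp
  have "traj_w lam s T = 1"
    using scaled_time_inv_scaled_time[OF assms(2,3), of 1] unfolding traj_w_def sT hit_time_def by simp
  then have end_point: "traj_u lam s T = 0" "traj_v lam s T < 0"
    using G_slope_pos[OF assms(2,3), of 0] assms unfolding traj_u_def traj_v_def by auto
  have before: "traj_u lam s t \<noteq> 0" if "t \<in> {0..<T}" for t
  proof -
    have "0 \<le> sqrt lam * t" "sqrt lam * t < hit_time s"
      using that assms(1) unfolding sT[symmetric] by auto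
    then have "0 \<le> traj_w lam s t" "traj_w lam s t < 1" using traj_w_range[OF assms(2,3)] by auto
    then have "(traj_w lam s t)^2 < 1" by (simp add: abs_square_less_1)
    then show ?thesis unfolding traj_u_def using assms by simp
  qed
  show "hit_time s / sqrt lam > 0 \<and> (\<exists>u v. solves lam s (hit_time s / sqrt lam) u v \<and>
      u (hit_time s / sqrt lam) = 0 \<and> v (hit_time s / sqrt lam) < 0 \<and>
      (\<forall>t\<in>{0..<hit_time s / sqrt lam}. u t \<noteq> 0 \<or> 0 \<le> v t))"
    unfolding T_def[symmetric]
  proof (intro conjI exI ballI disjI1)
    show "0 < T" using hit_time_pos[OF assms(2,3)] assms(1) unfolding T_def by simp
    show "solves lam s T (traj_u lam s) (traj_v lam s)" using traj_solves[OF assms] sT by simp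
  qed (use end_point before in auto)
  fix T' assume "0 < T' \<and> (\<exists>u v. solves lam s T' u v \<and> u T' = 0 \<and> v T' < 0 \<and>
    (\<forall>t\<in>{0..<T'}. u t \<noteq> 0 \<or> 0 \<le> v t))"
  then obtain u v where "0 < T'" "solves lam s T' u v" "u T' = 0" by blast
  from solves_hit_time[OF assms this(2) less_imp_le[OF this(1)] this(3)] show "T' = T"
    unfolding T_def using assms(1) by simp
qed

lemma solves_eq_traj:
  assumes "0 < lam" "0 < s" "s < 1" "0 < \<sigma>" "sqrt lam * \<sigma> < hit_time s" "solves lam s \<sigma> u v"
  shows "u \<sigma> = traj_u lam s \<sigma>" "v \<sigma> = traj_v lam s \<sigma>"
proof -
  have u0: "u 0 = s" using assms(6) unfolding solves_def by auto
  have u_pos: "0 < u \<sigma>"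
  proof (rule ccontr)
    assume "\<not> 0 < u \<sigma>"
    then obtain t where t: "0 \<le> t" "t \<le> \<sigma>" "u t = 0"
      using IVT2'[of u \<sigma> 0 0] continuous_on_solves(1)[OF assms(6)] u0 assms(2,4) by auto
    have "hit_time s = sqrt lam * t"
      using solves_hit_time[OF assms(1-3) solves_restrict[OF assms(6) t(2)] t(1,3)] .
    also have "\<dots> \<le> sqrt lam * \<sigma>" using t assms(1) by (intro mult_left_mono) auto
    finally show False using assms(5) by simp
  qed
  from solves_scaled_time[OF assms(1-3,6) solves_u_nonneg[OF assms(1-3,6)], of \<sigma>] u_pos
  have "scaled_time s (sqrt (1 - u \<sigma> / s)) = sqrt lam * \<sigma>" using assms(4) by simp
  moreover have "u \<sigma> \<le> s" using solves_u_decreasing[OF assms(1-3,6), of 0 \<sigma>] u0 assms(4) by auto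
  then have w: "0 \<le> 1 - u \<sigma> / s" "1 - u \<sigma> / s \<le> 1" using u_pos assms(2) by auto
  moreover have "-1 < sqrt (1 - u \<sigma> / s)" "sqrt (1 - u \<sigma> / s) < 11/10"
    using real_sqrt_ge_zero[OF w(1)] real_sqrt_le_1_iff[of "1 - u \<sigma> / s"] w(2) by linarith+
  ultimately have "traj_w lam s \<sigma> = sqrt (1 - u \<sigma> / s)"
    using scaled_time_inv_scaled_time[OF assms(2,3)] unfolding traj_w_def by metis
  then show u: "u \<sigma> = traj_u lam s \<sigma>" using w assms(2) unfolding traj_u_def by simp
  have "v \<sigma> < 0" using solves_v_neg[OF assms(1-3,6), of \<sigma>] assms(4) by auto
  then have "v \<sigma> = - sqrt ((v \<sigma>)^2)" by simp
  also have "(v \<sigma>)^2 = 2 * lam * (G s - G (u \<sigma>))"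
    using solves_energy[OF assms(6), of \<sigma>] assms(4) by (auto simp: algebra_simps)
  finally have "v \<sigma> = - sqrt (2 * lam * (G s - G (u \<sigma>)))" .
  then show "v \<sigma> = traj_v lam s \<sigma>" using traj_v_eq[OF assms(1-3) _ assms(5)] assms(1,4) u by simp
qed

lemma Gamma0_eq:
  assumes "0 < lam" "0 < \<sigma>"
  shows "Gamma0 lam \<sigma> = (\<lambda>s. (traj_u lam s \<sigma>, traj_v lam s \<sigma>)) ` {s \<in> {0<..<1}. sqrt lam * \<sigma> < hit_time s}"
proof -
  have I0: "I0 lam \<sigma> = {s \<in> {0<..<1}. sqrt lam * \<sigma> < hit_time s}"
    using T0_eq assms(1) by (auto simp: I0_def pos_less_divide_eq mult.commute)
  show ?thesis
  proof (intro equalityI subsetI)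
    fix p assume "p \<in> Gamma0 lam \<sigma>"
    then obtain s u v where p: "p = (u \<sigma>, v \<sigma>)" "s \<in> I0 lam \<sigma>" "solves lam s \<sigma> u v"
      unfolding Gamma0_def by auto
    then show "p \<in> (\<lambda>s. (traj_u lam s \<sigma>, traj_v lam s \<sigma>)) ` {s \<in> {0<..<1}. sqrt lam * \<sigma> < hit_time s}"
      using solves_eq_traj[OF assms(1) _ _ assms(2)] unfolding I0 by (intro image_eqI[of _ _ s]) auto
  next
    fix p assume "p \<in> (\<lambda>s. (traj_u lam s \<sigma>, traj_v lam s \<sigma>)) ` {s \<in> {0<..<1}. sqrt lam * \<sigma> < hit_time s}"
    then obtain s where "s \<in> I0 lam \<sigma>" "p = (traj_u lam s \<sigma>, traj_v lam s \<sigma>)" unfolding I0 by auto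
    moreover have "solves lam s \<sigma> (traj_u lam s) (traj_v lam s)"
      using traj_solves[OF assms(1)] calculation(1) unfolding I0 by auto
    ultimately show "p \<in> Gamma0 lam \<sigma>" unfolding Gamma0_def by blast
  qed
qed

section \<open>Convexity and blow-up of the hit time\<close>

lemma convex_on_inverse_sqrt: "convex_on {0<..} (\<lambda>y. 1 / sqrt y)"
proof (rule convex_on_realI)
  show "((\<lambda>y. 1 / sqrt y) has_real_derivative - 1 / (2 * y * sqrt y)) (at y)" if "y \<in> {0<..}" for y
    using that by (auto intro!: derivative_eq_intros simp: field_simps)
  show "- 1 / (2 * x * sqrt x) \<le> - 1 / (2 * y * sqrt y)" if "x \<in> {0<..}" "y \<in> {0<..}" "x \<le> y" for x y
    using that by (simp add: frac_le mult_mono)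
qed simp

lemma s_G_slope_strict_concave:
  assumes "-1 < x" "0 < t" "t < 1" "a \<noteq> b"
  shows "(1 - t) * (a * G_slope a x) + t * (b * G_slope b x)
    < ((1 - t) * a + t * b) * G_slope ((1 - t) * a + t * b) x"
proof -
  have "((1 - t) * a + t * b) * G_slope ((1 - t) * a + t * b) x
      - ((1 - t) * (a * G_slope a x) + t * (b * G_slope b x))
      = (1 + x) * (1 + x^2) / 4 * t * (1 - t) * (a - b)^2"
    unfolding G_slope_def by (simp add: field_simps power2_eq_square power3_eq_cube)
  moreover have "0 < (1 + x) * (1 + x^2) / 4 * t * (1 - t) * (a - b)^2"
    using assms by (intro mult_pos_pos) (auto simp: add_pos_nonneg)
  ultimately show ?thesis by linarith
qed

lemma convex_combination_in_unit_interval: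
  fixes a b t :: real
  assumes "a \<in> {0<..<1}" "b \<in> {0<..<1}" "0 < t" "t < 1"
  shows "(1 - t) * a + t * b \<in> {0<..<1}"
proof -
  have "(1 - t) * a < (1 - t) * 1" by (rule mult_strict_left_mono) (use assms in auto)
  moreover have "t * b < t * 1" by (rule mult_strict_left_mono) (use assms in auto)
  moreover have "0 < (1 - t) * a" "0 < t * b" using assms by auto
  ultimately show ?thesis by auto
qed

lemma time_density_strict_convex:
  assumes "r \<in> {-1..1}"
  shows "strict_convex_on {0<..<1} (\<lambda>s. time_density s r)"
  unfolding strict_convex_on_def
proof (intro ballI impI allI)
  fix a b t :: real
  assume ab: "a \<in> {0<..<1}" "b \<in> {0<..<1}" "a \<noteq> b" and t: "0 < t \<and> t < 1"
  define m where "m = (1 - t) * a + t * b"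
  have m: "m \<in> {0<..<1}" unfolding m_def using convex_combination_in_unit_interval[OF ab(1,2)] t by blast
  define x where "x = 1 - r^2"
  have x: "-1 < x" "x \<le> 1" using assms abs_square_le_1[of r] unfolding x_def by (auto simp: abs_le_iff)
  have r: "r \<in> {-(6/5)..6/5}" using assms by auto
  define y where "y s = 2 * s * G_slope s x" for s
  have y_pos: "0 < y s" if "s \<in> {0<..<1}" for s
    using G_slope_one_minus_square_pos[OF _ _ r, of s] that unfolding y_def x_def by auto
  have density: "time_density s r = 2 * (1 / sqrt (y s))" for s
    unfolding time_density_def y_def x_def by simp
  have "(1 - t) * y a + t * y b = 2 * ((1 - t) * (a * G_slope a x) + t * (b * G_slope b x))"
    unfolding y_def by (simp add: algebra_simps)
  also have "\<dots> < 2 * (m * G_slope m x)"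
    using s_G_slope_strict_concave[OF x(1) _ _ ab(3), of t] t unfolding m_def by simp
  also have "\<dots> = y m" unfolding y_def by simp
  finally have less: "(1 - t) * y a + t * y b < y m" .
  have "0 < (1 - t) * y a + t * y b"
    using y_pos[OF ab(1)] y_pos[OF ab(2)] t by (intro add_pos_pos mult_pos_pos) auto
  then have "1 / sqrt (y m) < 1 / sqrt ((1 - t) * y a + t * y b)"
    using less by (simp add: frac_less2)
  also have "\<dots> \<le> (1 - t) * (1 / sqrt (y a)) + t * (1 / sqrt (y b))"
    using convex_onD[OF convex_on_inverse_sqrt, of t "y a" "y b"] y_pos ab t by simp
  finally have "2 * (1 / sqrt (y m)) < 2 * ((1 - t) * (1 / sqrt (y a)) + t * (1 / sqrt (y b)))"
    by (simp only: mult_less_cancel_left_pos[of 2] zero_less_numeral)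
  then show "time_density ((1 - t) * a + t * b) r < (1 - t) * time_density a r + t * time_density b r"
    unfolding density m_def[symmetric] by (simp only: distrib_left mult.left_commute)
qed

lemma time_density_combination_integral:
  assumes "a \<in> {0<..<1}" "b \<in> {0<..<1}" "0 \<le> w" "w \<le> 1"
  shows "(\<lambda>r. (1 - t) * time_density a r + t * time_density b r) integrable_on {0..w}"
    and "integral {0..w} (\<lambda>r. (1 - t) * time_density a r + t * time_density b r)
      = (1 - t) * scaled_time a w + t * scaled_time b w"
proof -
  have da: "time_density a integrable_on {0..w}" and db: "time_density b integrable_on {0..w}"
    using time_density_integrable[of a 0 w] time_density_integrable[of b 0 w] assms by auto
  have ia: "(\<lambda>r. (1 - t) * time_density a r) integrable_on {0..w}"
    using integrable_cmul[OF da, of "1 - t"] by simp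
  have ib: "(\<lambda>r. t * time_density b r) integrable_on {0..w}"
    using integrable_cmul[OF db, of t] by simp
  show "(\<lambda>r. (1 - t) * time_density a r + t * time_density b r) integrable_on {0..w}"
    by (rule integrable_add[OF ia ib])
  have "integral {0..w} (\<lambda>r. (1 - t) * time_density a r + t * time_density b r)
      = (1 - t) * integral {0..w} (time_density a) + t * integral {0..w} (time_density b)"
    by (simp add: integral_add[OF ia ib])
  also have "\<dots> = (1 - t) * scaled_time a w + t * scaled_time b w"
    using scaled_time_eq_integral assms by simp
  finally show "integral {0..w} (\<lambda>r. (1 - t) * time_density a r + t * time_density b r)
      = (1 - t) * scaled_time a w + t * scaled_time b w" .
qed

lemma scaled_time_convex:
  assumes "0 \<le> w" "w \<le> 1"
  shows "convex_on {0<..<1} (\<lambda>s. scaled_time s w)"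
proof (rule convex_onI)
  fix t a b :: real
  assume t: "0 < t" "t < 1" and ab: "a \<in> {0<..<1}" "b \<in> {0<..<1}"
  have m: "(1 - t) * a + t * b \<in> {0<..<1}" using convex_combination_in_unit_interval[OF ab(1,2)] t by blast
  have "scaled_time ((1 - t) * a + t * b) w = integral {0..w} (time_density ((1 - t) * a + t * b))"
    using scaled_time_eq_integral m assms by simp
  also have "\<dots> \<le> integral {0..w} (\<lambda>r. (1 - t) * time_density a r + t * time_density b r)"
  proof (rule integral_le)
    show "time_density ((1 - t) * a + t * b) integrable_on {0..w}"
      using time_density_integrable[of "(1 - t) * a + t * b" 0 w] m assms by auto
    show "(\<lambda>r. (1 - t) * time_density a r + t * time_density b r) integrable_on {0..w}"
      by (rule time_density_combination_integral(1)[OF ab assms])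
    show "time_density ((1 - t) * a + t * b) r \<le> (1 - t) * time_density a r + t * time_density b r"
      if "r \<in> {0..w}" for r
      using convex_onD[OF strict_convex_on_imp_convex_on[OF time_density_strict_convex], of r t a b]
        that assms t ab by simp
  qed
  also have "\<dots> = (1 - t) * scaled_time a w + t * scaled_time b w"
    by (rule time_density_combination_integral(2)[OF ab assms])
  finally show "scaled_time ((1 - t) *\<^sub>R a + t *\<^sub>R b) w \<le> (1 - t) * scaled_time a w + t * scaled_time b w"
    by simp
qed simp

lemma isCont_scaled_time_param:
  assumes "0 \<le> w" "w \<le> 1" "s \<in> {0<..<1}"
  shows "isCont (\<lambda>s. scaled_time s w) s"
  using convex_on_continuous[OF open_greaterThanLessThan scaled_time_convex[OF assms(1,2)]] assms(3)
    continuous_on_eq_continuous_at[OF open_greaterThanLessThan]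
  by blast

lemma hit_time_strict_convex: "strict_convex_on {0<..<1} hit_time"
  unfolding strict_convex_on_def
proof (intro ballI impI allI)
  fix a b t :: real
  assume ab: "a \<in> {0<..<1}" "b \<in> {0<..<1}" "a \<noteq> b" and t: "0 < t \<and> t < 1"
  have m: "(1 - t) * a + t * b \<in> {0<..<1}" using convex_combination_in_unit_interval[OF ab(1,2)] t by blast
  have cont: "continuous_on {0..1} (time_density s)" if "s \<in> {0<..<1}" for s
    by (rule continuous_on_subset[OF continuous_on_time_density]) (use that in auto)
  have "hit_time ((1 - t) * a + t * b) = integral {0..1} (time_density ((1 - t) * a + t * b))"
    using scaled_time_eq_integral m unfolding hit_time_def by simp
  also have "\<dots> < integral {0..1} (\<lambda>r. (1 - t) * time_density a r + t * time_density b r)"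
  proof (rule integral_less_real)
    show "continuous_on {0..1} (time_density ((1 - t) * a + t * b))" using cont[OF m] .
    show "continuous_on {0..1} (\<lambda>r. (1 - t) * time_density a r + t * time_density b r)"
      using cont[OF ab(1)] cont[OF ab(2)] by (intro continuous_intros)
    show "time_density ((1 - t) * a + t * b) r < (1 - t) * time_density a r + t * time_density b r"
      if "r \<in> {0<..<1}" for r
    proof -
      have "strict_convex_on {0<..<1} (\<lambda>s. time_density s r)"
        using that by (intro time_density_strict_convex) auto
      then show ?thesis using ab t unfolding strict_convex_on_def by blast
    qed
  qed simp
  also have "\<dots> = (1 - t) * hit_time a + t * hit_time b"
    unfolding hit_time_def by (rule time_density_combination_integral(2)[OF ab(1,2)]) auto
  finally show "hit_time ((1 - t) * a + t * b) < (1 - t) * hit_time a + t * hit_time b" .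
qed

lemma hit_time_lower_bound:
  assumes "0 < s" "s < 1"
  shows "2 / sqrt (2 * s) \<le> hit_time s"
proof -
  have "integral {0..1::real} (\<lambda>_. 2 / sqrt (2 * s)) \<le> integral {0..1} (time_density s)"
  proof (rule integral_le)
    show "time_density s integrable_on {0..1}" using time_density_integrable[of s 0 1] assms by simp
    fix r :: real assume r: "r \<in> {0..1}"
    define x where "x = 1 - r^2"
    have x: "0 \<le> x" "x \<le> 1" using r abs_square_le_1[of r] unfolding x_def by auto
    have Q: "0 < G_slope s x" using G_slope_one_minus_square_pos[OF assms, of r] r unfolding x_def by auto
    have "x^2 \<le> 1" using x by (simp add: power_le_one)
    then have "(1 + x + x^2) / 3 \<le> 1" using x by simp
    moreover have "0 \<le> s * (1 + x + x^2 + x^3) / 4" using x assms by simp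
    ultimately have "G_slope s x \<le> 1" unfolding G_slope_def by linarith
    then have "sqrt (2 * s * G_slope s x) \<le> sqrt (2 * s)" using assms by simp
    then show "2 / sqrt (2 * s) \<le> time_density s r"
      using Q assms unfolding time_density_def x_def[symmetric] by (simp add: frac_le)
  qed (rule integrable_const_ivl)
  then show ?thesis using scaled_time_eq_integral[OF assms, of 1] unfolding hit_time_def by simp
qed

lemma filterlim_hit_time_at_right_0: "filterlim hit_time at_top (at_right 0)"
proof (rule filterlim_at_top_mono)
  show "filterlim (\<lambda>s::real. 2 / sqrt (2 * s)) at_top (at_right 0)" by real_asymp
  have "eventually (\<lambda>s. s \<in> {0<..<1}) (at_right (0::real))" by (rule eventually_at_right_real) simp
  then show "eventually (\<lambda>s. 2 / sqrt (2 * s) \<le> hit_time s) (at_right 0)"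
    by eventually_elim (use hit_time_lower_bound in auto)
qed

text \<open>For \<open>s\<close> near \<open>1\<close> the orbit starts near the equilibrium \<open>u = 1\<close>: with \<open>d = sqrt (2 (1 - s))\<close>
  the time density is at least \<open>2 / (r + d)\<close>, whose integral over \<open>[0, 1/2]\<close> grows like \<open>- 2 ln d\<close>.\<close>
lemma scaled_time_half_lower_bound:
  assumes "0 < s" "s < 1"
  shows "2 * ln (1/2 + sqrt (2 * (1 - s))) - 2 * ln (sqrt (2 * (1 - s))) \<le> scaled_time s (1/2)"
proof -
  define d where "d = sqrt (2 * (1 - s))"
  have d: "0 < d" "d^2 = 2 * (1 - s)" using assms unfolding d_def by auto
  have primitive: "((\<lambda>r. 2 / (r + d)) has_integral (2 * ln (1/2 + d) - 2 * ln (0 + d))) {0..1/2}"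
  proof (rule fundamental_theorem_of_calculus)
    fix x :: real assume x: "x \<in> {0..1/2}"
    have "((\<lambda>r. 2 * ln (r + d)) has_real_derivative 2 * (1 / (x + d))) (at x within {0..1/2})"
      using x d by (auto intro!: derivative_eq_intros simp: field_simps)
    then show "((\<lambda>r. 2 * ln (r + d)) has_vector_derivative 2 / (x + d)) (at x within {0..1/2})"
      by (simp add: has_real_derivative_iff_has_vector_derivative)
  qed simp
  have "integral {0..1/2} (\<lambda>r. 2 / (r + d)) \<le> integral {0..1/2} (time_density s)"
  proof (rule integral_le)
    show "(\<lambda>r. 2 / (r + d)) integrable_on {0..1/2}" using primitive by blast
    show "time_density s integrable_on {0..1/2}" using time_density_integrable[of s 0 "1/2"] assms by simp
    fix r :: real assume r: "r \<in> {0..1/2}"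
    define x where "x = 1 - r^2"
    have x: "0 \<le> x" "x \<le> 1" using r abs_square_le_1[of r] unfolding x_def by auto
    have Q: "0 < G_slope s x" using G_slope_one_minus_square_pos[OF assms, of r] r unfolding x_def by auto
    have "x^2 \<le> 1" using x by (simp add: power_le_one)
    then have "(1 - x) * (1 + 2 * x + 3 * x^2) \<le> (1 - x) * 6" using x by (intro mult_left_mono) auto
    moreover have "(1 + x) * (1 + x^2) \<le> 2 * 2" using x \<open>x^2 \<le> 1\<close> by (intro mult_mono) auto
    then have "(1 - s) * ((1 + x) * (1 + x^2)) \<le> (1 - s) * 4" using assms by (intro mult_left_mono) auto
    ultimately have "G_slope s x \<le> (1 - x) / 2 + (1 - s)"
      unfolding G_slope_def by (simp add: field_simps power2_eq_square power3_eq_cube)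
    then have "2 * s * G_slope s x \<le> 2 * 1 * ((1 - x) / 2 + (1 - s))"
      using assms Q by (intro mult_mono) auto
    also have "\<dots> \<le> (r + d)^2" unfolding x_def d(2)[symmetric] using r d by (simp add: power2_sum)
    finally have "sqrt (2 * s * G_slope s x) \<le> r + d"
      using r d by (simp add: real_le_lsqrt)
    then show "2 / (r + d) \<le> time_density s r"
      using Q assms unfolding time_density_def x_def[symmetric] by (simp add: frac_le)
  qed
  then show ?thesis
    using integral_unique[OF primitive] scaled_time_eq_integral[OF assms, of "1/2"] unfolding d_def by simp
qed

lemma filterlim_scaled_time_half_at_left_1: "filterlim (\<lambda>s. scaled_time s (1/2)) at_top (at_left 1)"
proof (rule filterlim_at_top_mono)
  show "filterlim (\<lambda>s::real. 2 * ln (1/2 + sqrt (2 * (1 - s))) - 2 * ln (sqrt (2 * (1 - s))))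
      at_top (at_left 1)"
    by real_asymp
  have "eventually (\<lambda>s. s \<in> {0<..<1}) (at_left (1::real))" by (rule eventually_at_left_real) simp
  then show "eventually (\<lambda>s. 2 * ln (1/2 + sqrt (2 * (1 - s))) - 2 * ln (sqrt (2 * (1 - s)))
      \<le> scaled_time s (1/2)) (at_left 1)"
    by eventually_elim (use scaled_time_half_lower_bound in auto)
qed

lemma filterlim_hit_time_at_left_1: "filterlim hit_time at_top (at_left 1)"
proof (rule filterlim_at_top_mono[OF filterlim_scaled_time_half_at_left_1])
  have "eventually (\<lambda>s. s \<in> {0<..<1}) (at_left (1::real))" by (rule eventually_at_left_real) simp
  then show "eventually (\<lambda>s. scaled_time s (1/2) \<le> hit_time s) (at_left 1)"
    by eventually_elim (auto simp: hit_time_def scaled_time_le_iff)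
qed

section \<open>The closure of Gamma0 near the negative v-axis\<close>

lemma traj_u_lower_bound:
  assumes "0 < s" "s < 1" "0 \<le> sqrt lam * t" "sqrt lam * t < hit_time s"
    and "0 \<le> w" "w \<le> 1" "sqrt lam * t \<le> scaled_time s w"
  shows "s * (1 - w^2) \<le> traj_u lam s t"
proof -
  have "traj_w lam s t \<le> w"
    using traj_w_bounds[OF assms(1,2) scaled_time_inv_domain[OF assms(1-3) less_imp_le[OF assms(4)]]]
      scaled_time_le_iff[OF assms(1,2), of "traj_w lam s t" w] assms(5-7) by auto
  then have "(traj_w lam s t)^2 \<le> w^2" using traj_w_range[OF assms(1-4)] by (simp add: power_mono)
  then show ?thesis unfolding traj_u_def using assms(1) by simp
qed

lemma traj_w_tendsto_1:
  assumes "F \<le> at s0" "s0 \<in> {0<..<1}" "hit_time s0 = sqrt lam * t" "0 \<le> sqrt lam * t"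
    and "eventually (\<lambda>s. s \<in> {0<..<1} \<and> sqrt lam * t < hit_time s) F"
  shows "((\<lambda>s. traj_w lam s t) \<longlongrightarrow> 1) F"
proof (rule tendstoI)
  fix e :: real assume "0 < e"
  define w where "w = max 0 (1 - e / 2)"
  have w: "0 \<le> w" "w < 1" "1 - w < e" using \<open>0 < e\<close> unfolding w_def by auto
  have "scaled_time s0 w < sqrt lam * t"
    using scaled_time_strict_mono[of s0 w 1] assms(2,3) w unfolding hit_time_def by auto
  moreover have "((\<lambda>s. scaled_time s w) \<longlongrightarrow> scaled_time s0 w) (at s0)"
    using isCont_scaled_time_param[of w s0] w assms(2) by (simp add: isCont_def)
  ultimately have "eventually (\<lambda>s. scaled_time s w < sqrt lam * t) F"
    using order_tendstoD(2) filter_leD[OF assms(1)] by blast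
  then show "eventually (\<lambda>s. dist (traj_w lam s t) 1 < e) F"
    using assms(5)
  proof eventually_elim
    case (elim s)
    then have "w < traj_w lam s t" "traj_w lam s t < 1"
      using traj_w_bounds[OF _ _ scaled_time_inv_domain[OF _ _ assms(4)], of s]
        scaled_time_less_iff[of s w "traj_w lam s t"] traj_w_range[of s lam t] assms(4) w
      by auto
    then show ?case using w by (simp add: dist_real_def)
  qed
qed

lemma traj_energy:
  assumes "0 < lam" "s \<in> {0<..<1}" "0 \<le> sqrt lam * t" "sqrt lam * t < hit_time s"
  shows "G s = (traj_v lam s t)^2 / (2 * lam) + G (traj_u lam s t)"
proof -
  have "sqrt lam * t \<le> hit_time s" "0 \<le> t" using assms(1,3,4) by (auto simp: zero_le_mult_iff)
  then have "(traj_v lam s t)^2 + 2 * lam * G (traj_u lam s t) = 2 * lam * G s"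
    using solves_energy[OF traj_solves[OF assms(1)], of s t t] assms(1-3) by auto
  then show ?thesis using assms(1) by (simp add: field_simps)
qed

lemma axis_point_in_closure:
  assumes "0 < lam" "0 < \<sigma>" "s0 \<in> {0<..<1}" "hit_time s0 = sqrt lam * \<sigma>"
  shows "(0, - sqrt (2 * lam * G s0)) \<in> closure (Gamma0 lam \<sigma>)"
proof -
  have c: "0 \<le> sqrt lam * \<sigma>" using assms(1,2) by simp
  have from_side: "(0, - sqrt (2 * lam * G s0)) \<in> closure (Gamma0 lam \<sigma>)"
    if F: "F \<noteq> bot" "F \<le> at s0" and ev: "eventually (\<lambda>s. s \<in> {0<..<1} \<and> sqrt lam * \<sigma> < hit_time s) F"
    for F
  proof (rule Lim_in_closed_set[OF closed_closure _ F(1)])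
    show "eventually (\<lambda>s. (traj_u lam s \<sigma>, traj_v lam s \<sigma>) \<in> closure (Gamma0 lam \<sigma>)) F"
      using ev by eventually_elim (use Gamma0_eq[OF assms(1,2)] closure_subset in blast)
    have S: "((\<lambda>s. s) \<longlongrightarrow> s0) F" using F(2) by (rule tendsto_mono) simp
    have "((\<lambda>s. s * (1 - (traj_w lam s \<sigma>)^2)) \<longlongrightarrow> s0 * (1 - 1^2)) F"
      by (intro tendsto_intros S traj_w_tendsto_1[OF F(2) assms(3,4) c ev])
    then have U: "((\<lambda>s. traj_u lam s \<sigma>) \<longlongrightarrow> 0) F" unfolding traj_u_def by simp
    have "((\<lambda>s. - sqrt (2 * lam * (G s - G (traj_u lam s \<sigma>)))) \<longlongrightarrow> - sqrt (2 * lam * (G s0 - G 0))) F"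
      by (intro tendsto_intros isCont_tendsto_compose[OF isCont_G] S U)
    moreover have "eventually (\<lambda>s. - sqrt (2 * lam * (G s - G (traj_u lam s \<sigma>))) = traj_v lam s \<sigma>) F"
      using ev by eventually_elim (use traj_v_eq[OF assms(1)] c in auto)
    ultimately have V: "((\<lambda>s. traj_v lam s \<sigma>) \<longlongrightarrow> - sqrt (2 * lam * G s0)) F"
      by (auto simp: G_def dest: Lim_transform_eventually)
    show "((\<lambda>s. (traj_u lam s \<sigma>, traj_v lam s \<sigma>)) \<longlongrightarrow> (0, - sqrt (2 * lam * G s0))) F"
      by (rule tendsto_Pair[OF U V])
  qed
  from strict_convex_on_grows_on_one_side[OF hit_time_strict_convex assms(3)] show ?thesis
  proof
    assume left: "\<forall>x\<in>{0<..<s0}. hit_time s0 < hit_time x"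
    have "eventually (\<lambda>s. s \<in> {0<..<s0}) (at_left s0)"
      using assms(3) by (intro eventually_at_left_real) auto
    then have "eventually (\<lambda>s. s \<in> {0<..<1} \<and> sqrt lam * \<sigma> < hit_time s) (at_left s0)"
      by eventually_elim (use left assms(3,4) in auto)
    then show ?thesis by (intro from_side) (auto simp: at_le)
  next
    assume right: "\<forall>x\<in>{s0<..<1}. hit_time s0 < hit_time x"
    have "eventually (\<lambda>s. s \<in> {s0<..<1}) (at_right s0)"
      using assms(3) by (intro eventually_at_right_real) auto
    then have "eventually (\<lambda>s. s \<in> {0<..<1} \<and> sqrt lam * \<sigma> < hit_time s) (at_right s0)"
      by eventually_elim (use right assms(3,4) in auto)
    then show ?thesis by (intro from_side) (auto simp: at_le)
  qed
qed

lemma scaled_time_exceeds_below_1: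
  assumes "0 < s" "s < 1" "c < hit_time s"
  obtains w where "0 \<le> w" "w < 1" "c < scaled_time s w"
proof -
  have "(scaled_time s \<longlongrightarrow> scaled_time s 1) (at_left 1)"
    using DERIV_isCont[OF DERIV_scaled_time[of s 1]] assms(1,2) by (simp add: isCont_def filterlim_at_split)
  then have "eventually (\<lambda>w. c < scaled_time s w) (at_left 1)"
    using assms(3) order_tendstoD(1) unfolding hit_time_def by blast
  then obtain b where "b < 1" "\<forall>w>b. w < 1 \<longrightarrow> c < scaled_time s w"
    by (auto simp: eventually_at_left_field)
  then show ?thesis by (intro that[of "max 0 ((b + 1) / 2)"]) (auto simp: less_max_iff_disj)
qed

lemma traj_u_limit_lower_bound:
  assumes "0 < lam" "0 < \<sigma>" "\<And>n. sq n \<in> {0<..<1}" "\<And>n. sqrt lam * \<sigma> < hit_time (sq n)"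
    and "sq \<longlonglongrightarrow> l" "(\<lambda>n. traj_u lam (sq n) \<sigma>) \<longlonglongrightarrow> 0" "0 \<le> w" "w \<le> 1"
    and "eventually (\<lambda>n. sqrt lam * \<sigma> \<le> scaled_time (sq n) w) sequentially"
  shows "l * (1 - w^2) \<le> 0"
proof -
  have c: "0 \<le> sqrt lam * \<sigma>" using assms(1,2) by simp
  from assms(9) have "eventually (\<lambda>n. sq n * (1 - w^2) \<le> traj_u lam (sq n) \<sigma>) sequentially"
    by eventually_elim (use traj_u_lower_bound assms(3,4,7,8) c in auto)
  then show ?thesis using tendsto_le[OF _ assms(6) tendsto_mult[OF assms(5) tendsto_const]] by simp
qed

text \<open>Along points of \<open>Gamma0\<close> whose \<open>u\<close>-coordinate tends to \<open>0\<close>, the initial data can neither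
  approach \<open>1\<close> nor a point where \<open>hit_time\<close> exceeds \<open>sqrt lam * \<sigma>\<close>: in both cases some
  \<open>scaled_time (sq n) w\<close> with \<open>w < 1\<close> stays above \<open>sqrt lam * \<sigma>\<close>, which keeps \<open>u\<close> above
  \<open>sq n * (1 - w^2)\<close>.\<close>
lemma hit_time_at_limit:
  assumes "0 < lam" "0 < \<sigma>" "\<And>n. sq n \<in> {0<..<1}" "\<And>n. sqrt lam * \<sigma> < hit_time (sq n)"
    and "sq \<longlonglongrightarrow> l" "0 < l" "(\<lambda>n. traj_u lam (sq n) \<sigma>) \<longlonglongrightarrow> 0"
  shows "l < 1" "hit_time l = sqrt lam * \<sigma>"
proof -
  define c where "c = sqrt lam * \<sigma>"
  have no_bound: "\<not> eventually (\<lambda>n. c \<le> scaled_time (sq n) w) sequentially" if "0 \<le> w" "w < 1" for w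
  proof
    assume "eventually (\<lambda>n. c \<le> scaled_time (sq n) w) sequentially"
    then have "l * (1 - w^2) \<le> 0" using traj_u_limit_lower_bound[OF assms(1-5,7)] that unfolding c_def by simp
    moreover have "w^2 < 1" using that by (simp add: abs_square_less_1)
    ultimately show False using assms(6) by (simp add: mult_le_0_iff)
  qed
  show "l < 1"
  proof (rule ccontr)
    assume "\<not> l < 1"
    moreover have "l \<le> 1"
      using assms(3) by (intro tendsto_upperbound[OF assms(5)] always_eventually) (auto intro: less_imp_le)
    ultimately have "filterlim sq (at_left 1) sequentially"
      using tendsto_imp_filterlim_at_left[OF assms(5)] assms(3) by auto
    from filterlim_compose[OF filterlim_scaled_time_half_at_left_1 this]
    have "eventually (\<lambda>n. c \<le> scaled_time (sq n) (1/2)) sequentially"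
      by (simp add: filterlim_at_top)
    then show False using no_bound[of "1/2"] by simp
  qed
  then have l: "l \<in> {0<..<1}" using assms(6) by simp
  have "(\<lambda>n. hit_time (sq n)) \<longlonglongrightarrow> hit_time l"
    using isCont_tendsto_compose[OF isCont_scaled_time_param[of 1 l] assms(5)] l
    unfolding hit_time_def by simp
  then have "c \<le> hit_time l"
    using assms(4) by (intro tendsto_lowerbound) (auto simp: c_def less_imp_le)
  moreover have "\<not> c < hit_time l"
  proof
    assume "c < hit_time l"
    then obtain w where w: "0 \<le> w" "w < 1" "c < scaled_time l w"
      using scaled_time_exceeds_below_1 l by auto
    have "(\<lambda>n. scaled_time (sq n) w) \<longlonglongrightarrow> scaled_time l w"
      using isCont_tendsto_compose[OF isCont_scaled_time_param assms(5)] w l by auto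
    then have "eventually (\<lambda>n. c < scaled_time (sq n) w) sequentially"
      using order_tendstoD(1) w(3) by blast
    then have "eventually (\<lambda>n. c \<le> scaled_time (sq n) w) sequentially"
      by (rule eventually_mono) simp
    then show False using no_bound[OF w(1,2)] by blast
  qed
  ultimately show "hit_time l = sqrt lam * \<sigma>" unfolding c_def by simp
qed

lemma axis_point_of_closure:
  assumes "0 < lam" "0 < \<sigma>" "(0, y) \<in> closure (Gamma0 lam \<sigma>)" "y < 0"
  shows "\<exists>s0\<in>{0<..<1}. hit_time s0 = sqrt lam * \<sigma> \<and> y = - sqrt (2 * lam * G s0)"
proof -
  obtain f where f: "\<And>n. f n \<in> Gamma0 lam \<sigma>" "f \<longlonglongrightarrow> (0, y)"
    using assms(3) unfolding closure_sequential by blast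
  have "\<forall>n. \<exists>s. s \<in> {0<..<1} \<and> sqrt lam * \<sigma> < hit_time s \<and> f n = (traj_u lam s \<sigma>, traj_v lam s \<sigma>)"
    using f(1) unfolding Gamma0_eq[OF assms(1,2)] by blast
  then obtain sq where sq: "\<And>n. sq n \<in> {0<..<1}" "\<And>n. sqrt lam * \<sigma> < hit_time (sq n)"
    and f_eq: "\<And>n. f n = (traj_u lam (sq n) \<sigma>, traj_v lam (sq n) \<sigma>)"
    by metis
  define a where "a n = traj_u lam (sq n) \<sigma>" for n
  define b where "b n = traj_v lam (sq n) \<sigma>" for n
  have a_lim: "a \<longlonglongrightarrow> 0" and b_lim: "b \<longlonglongrightarrow> y"
    using tendsto_fst[OF f(2)] tendsto_snd[OF f(2)] unfolding f_eq a_def b_def by auto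
  have energy: "G (sq n) = (b n)^2 / (2 * lam) + G (a n)" for n
    using traj_energy[OF assms(1) sq(1) _ sq(2)] assms(1,2) unfolding a_def b_def by simp
  have "\<forall>n. sq n \<in> {0..1}" using sq(1) by (simp add: less_imp_le)
  then obtain l r where l: "l \<in> {0..1}" and r: "strict_mono r" and lim: "(sq \<circ> r) \<longlonglongrightarrow> l"
    using seq_compactE[OF compact_imp_seq_compact[OF compact_Icc]] by metis
  have "(\<lambda>n. G (sq (r n))) \<longlonglongrightarrow> G l"
    using isCont_tendsto_compose[OF isCont_G lim] by (simp add: comp_def)
  moreover have "(\<lambda>n. (b (r n))^2 / (2 * lam) + G (a (r n))) \<longlonglongrightarrow> y^2 / (2 * lam) + G 0"
    using LIMSEQ_subseq_LIMSEQ[OF b_lim r] LIMSEQ_subseq_LIMSEQ[OF a_lim r]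
    by (intro tendsto_intros isCont_tendsto_compose[OF isCont_G]) (use assms(1) in \<open>auto simp: comp_def\<close>)
  ultimately have Gl: "G l = y^2 / (2 * lam)"
    unfolding energy by (auto simp: G_def intro: LIMSEQ_unique)
  then have "0 < G l" using assms(1,4) by simp
  then have "0 < l" using l by (cases "l = 0") (auto simp: G_def)
  moreover have "(\<lambda>n. a (r n)) \<longlonglongrightarrow> 0" using LIMSEQ_subseq_LIMSEQ[OF a_lim r] by (simp add: comp_def)
  ultimately have "l < 1" "hit_time l = sqrt lam * \<sigma>"
    using hit_time_at_limit[OF assms(1,2), of "sq \<circ> r" l] sq lim unfolding a_def by auto
  moreover have "y = - sqrt (y^2)" using assms(4) by simp
  then have "y = - sqrt (2 * lam * G l)" using Gl assms(1) by (simp add: field_simps)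
  ultimately show ?thesis using \<open>0 < l\<close> by auto
qed

lemma closure_Gamma0_axis:
  assumes "0 < lam" "0 < \<sigma>"
  shows "closure (Gamma0 lam \<sigma>) \<inter> ({0} \<times> {..<0})
    = (\<lambda>s. (0, - sqrt (2 * lam * G s))) ` {s \<in> {0<..<1}. hit_time s = sqrt lam * \<sigma>}"
proof (intro equalityI subsetI)
  fix p assume "p \<in> closure (Gamma0 lam \<sigma>) \<inter> ({0} \<times> {..<0})"
  then obtain y where p: "p = (0, y)" "y < 0" "(0, y) \<in> closure (Gamma0 lam \<sigma>)" by auto
  from axis_point_of_closure[OF assms p(3,2)] obtain s
    where "s \<in> {0<..<1}" "hit_time s = sqrt lam * \<sigma>" "y = - sqrt (2 * lam * G s)" by blast
  then show "p \<in> (\<lambda>s. (0, - sqrt (2 * lam * G s))) ` {s \<in> {0<..<1}. hit_time s = sqrt lam * \<sigma>}"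
    using p(1) by (intro image_eqI[of _ _ s]) simp_all
next
  fix p :: "real \<times> real"
  assume "p \<in> (\<lambda>s. (0, - sqrt (2 * lam * G s))) ` {s \<in> {0<..<1}. hit_time s = sqrt lam * \<sigma>}"
  then obtain s where s: "s \<in> {0<..<1}" "hit_time s = sqrt lam * \<sigma>" "p = (0, - sqrt (2 * lam * G s))"
    by auto
  moreover have "0 < G s" using G_pos s(1) by simp
  ultimately show "p \<in> closure (Gamma0 lam \<sigma>) \<inter> ({0} \<times> {..<0})"
    using axis_point_in_closure[OF assms s(1,2)] assms(1) by auto
qed

theorem corollary2p1:
  fixes \<sigma> :: real
  assumes "0 < \<sigma>" and "\<sigma> < 1/2"
  shows "\<exists>lams > 0.
     (\<forall>lam. 0 < lam \<and> lam < lams \<longrightarrow>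
        closure (Gamma0 lam \<sigma>) \<inter> ({0} \<times> {..<0}) = {}) \<and>
     (\<exists>\<xi>. 0 < \<xi> \<and> closure (Gamma0 lams \<sigma>) \<inter> ({0} \<times> {..<0}) = {(0, -\<xi>)}) \<and>
     (\<forall>lam. lam > lams \<longrightarrow> (\<exists>\<xi>0 \<xi>1. 0 < \<xi>0 \<and> \<xi>0 < \<xi>1 \<and>
        closure (Gamma0 lam \<sigma>) \<inter> ({0} \<times> {..<0}) = {(0, -\<xi>0), (0, -\<xi>1)}))"
proof -
  obtain m where m: "m \<in> {0<..<1}" "\<forall>s\<in>{0<..<1}. hit_time m \<le> hit_time s"
    "{s \<in> {0<..<1}. hit_time s = hit_time m} = {m}"
    "\<And>c. hit_time m < c \<Longrightarrow> \<exists>s0 s1. s0 < s1 \<and> {s \<in> {0<..<1}. hit_time s = c} = {s0, s1}"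
    using strict_convex_coercive_level_sets[OF hit_time_strict_convex filterlim_hit_time_at_right_0
        filterlim_hit_time_at_left_1 zero_less_one] by blast
  define lams where "lams = (hit_time m / \<sigma>)^2"
  have lams: "0 < lams" "sqrt lams * \<sigma> = hit_time m"
    using hit_time_pos[of m] m(1) assms(1) unfolding lams_def by auto
  have level: "sqrt lam * \<sigma> < hit_time m \<longleftrightarrow> lam < lams" "hit_time m < sqrt lam * \<sigma> \<longleftrightarrow> lams < lam"
    if "0 \<le> lam" for lam
    using lams(2)[symmetric] that assms(1) lams(1) by simp_all
  show ?thesis
  proof (rule exI[of _ lams], intro conjI allI impI)
    show "0 < lams" by (fact lams(1))
  next
    fix lam assume lam: "0 < lam \<and> lam < lams"
    then have "{s \<in> {0<..<1}. hit_time s = sqrt lam * \<sigma>} = {}"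
      using m(2) level[of lam] by force
    then show "closure (Gamma0 lam \<sigma>) \<inter> ({0} \<times> {..<0}) = {}"
      using closure_Gamma0_axis[OF _ assms(1), of lam] lam by simp
  next
    have "closure (Gamma0 lams \<sigma>) \<inter> ({0} \<times> {..<0}) = {(0, - sqrt (2 * lams * G m))}"
      using closure_Gamma0_axis[OF lams(1) assms(1)] m(3) lams(2) by simp
    moreover have "0 < sqrt (2 * lams * G m)" using G_pos m(1) lams(1) by simp
    ultimately show "\<exists>\<xi>. 0 < \<xi> \<and> closure (Gamma0 lams \<sigma>) \<inter> ({0} \<times> {..<0}) = {(0, - \<xi>)}" by blast
  next
    fix lam assume "lams < lam"
    then have lam: "0 < lam" "hit_time m < sqrt lam * \<sigma>"
      using lams(1) level[of lam] by auto
    obtain s0 s1 where s: "s0 < s1" "{s \<in> {0<..<1}. hit_time s = sqrt lam * \<sigma>} = {s0, s1}"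
      using m(4)[OF lam(2)] by blast
    then have "s0 \<in> {0<..<1}" "s1 \<in> {0<..<1}" by auto
    then have "0 < sqrt (2 * lam * G s0)" "sqrt (2 * lam * G s0) < sqrt (2 * lam * G s1)"
      using G_pos G_less[OF s(1)] lam(1) by auto
    moreover have "closure (Gamma0 lam \<sigma>) \<inter> ({0} \<times> {..<0})
        = {(0, - sqrt (2 * lam * G s0)), (0, - sqrt (2 * lam * G s1))}"
      using closure_Gamma0_axis[OF lam(1) assms(1)] s(2) by simp
    ultimately show "\<exists>\<xi>0 \<xi>1. 0 < \<xi>0 \<and> \<xi>0 < \<xi>1 \<and>
        closure (Gamma0 lam \<sigma>) \<inter> ({0} \<times> {..<0}) = {(0, - \<xi>0), (0, - \<xi>1)}"
      by blast
  qed
qed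

end
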